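(* Let $q_1<q_2<\cdots$ be the primes, $\Pi(x)$ the prime-counting function, and let $\phi:\mathbb{N}_0\to\mathbb{N}_0$ be defined by $\phi(q_j)=q_{j+1}$ for every $j\ge1$ and $\phi(x)=0$ if $x$ is not prime (including $x=0$). Then $\phi(x)\neq x$ for all $x\in\mathbb{N}$ and $\phi$ has no cycle. Moreover, for $n\ge2$: (1) $M_n(\phi)$ is nilpotent of degree $\Pi(n)$. (2) For $1\le k\le\Pi(n)$, $M_n(\phi)^k=\sum_{j=1}^{\Pi(n)-k}E_n(q_{j+k},q_j)$ and $\#M_n(\phi)^k=\Pi(n)-k$. (3) $\widehat{M}_n(\phi)^{-1}=I+\sum_{1\le j<i\le\Pi(n)}E_n(q_i,q_j)$ and $\#\widehat{M}_n(\phi)^{-1}=n+\binom{\Pi(n)}{2}$.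
   Context: $\mathbb{N}=\{1,2,\dots\}$, $\mathbb{N}_0=\mathbb{N}\cup\{0\}$, $D_n=\{1,\dots,n\}$, $D_{n,0}=D_n\cup\{0\}$. The local function $\phi_n:D_{n,0}\to D_{n,0}$ is $\phi_n(x)=\phi(x)$ if $x\in D_n$ and $\phi(x)\in D_n$, and $\phi_n(x)=0$ otherwise. A cycle of $\phi$ is given by $m\ge2$ and $x\in\mathbb{N}$ with $\phi^m(x)=x$. For $1\le i\le n$, $\mathbf{e}_i$ is the $i$-th unit vector in $\mathbb{Z}^n$ and $\mathbf{e}_0$ the zero vector; $E_n(i,j)=\mathbf{e}_i\mathbf{e}_j^t$. $M_n(\phi)$ is the $n\times n$ matrix whose $j$-th column is $\mathbf{e}_{\phi_n(j)}$, $\widehat{M}_n(\phi)=I-M_n(\phi)$. $\#A$ is the number of nonzero entries of $A$. A matrix $A$ is nilpotent of degree $k$ if $A^k=0$ and $A^{k-1}\ne0$. *)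

theory Defs
  imports "HOL-Computational_Algebra.Primes" "HOL-Library.Infinite_Set" "Jordan_Normal_Form.Matrix"
begin

(* 1-indexed matrix conventions: the paper's entry (i,j), 1 <= i,j <= n, is
   the Jordan_Normal_Form entry (i-1, j-1). *)

definition loc_fun :: "(nat \<Rightarrow> nat) \<Rightarrow> nat \<Rightarrow> nat \<Rightarrow> nat" where
  "loc_fun \<phi> n x = (if x \<in> {1..n} \<and> \<phi> x \<in> {1..n} then \<phi> x else 0)"

text \<open>M_n(phi): the j-th column is e_{phi_n(j)} (e_0 = zero vector).\<close>
definition M_mat :: "nat \<Rightarrow> (nat \<Rightarrow> nat) \<Rightarrow> int mat" where
  "M_mat n \<phi> = mat n n (\<lambda>(i, j). if loc_fun \<phi> n (j + 1) = i + 1 then 1 else 0)"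

definition M_hat :: "nat \<Rightarrow> (nat \<Rightarrow> nat) \<Rightarrow> int mat" where
  "M_hat n \<phi> = 1\<^sub>m n - M_mat n \<phi>"

text \<open>E_n(i,j) = e_i e_j^t (1-indexed; e_0 = 0).\<close>
definition E_mat :: "nat \<Rightarrow> nat \<Rightarrow> nat \<Rightarrow> int mat" where
  "E_mat n i j = mat n n (\<lambda>(a, b). if a + 1 = i \<and> b + 1 = j then 1 else 0)"

definition mat_sum :: "nat \<Rightarrow> ('b \<Rightarrow> int mat) \<Rightarrow> 'b set \<Rightarrow> int mat" where
  "mat_sum n f J = mat n n (\<lambda>ij. \<Sum>j\<in>J. f j $$ ij)"

definition nnz :: "'a::zero mat \<Rightarrow> nat" where
  "nnz A = card {(i, j). i < dim_row A \<and> j < dim_col A \<and> A $$ (i, j) \<noteq> 0}"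

definition nilpotent_of_degree :: "'a::semiring_1 mat \<Rightarrow> nat \<Rightarrow> bool" where
  "nilpotent_of_degree A k \<longleftrightarrow>
     A ^\<^sub>m k = 0\<^sub>m (dim_row A) (dim_col A) \<and> A ^\<^sub>m (k - 1) \<noteq> 0\<^sub>m (dim_row A) (dim_col A)"

definition has_cycle :: "(nat \<Rightarrow> nat) \<Rightarrow> bool" where
  "has_cycle \<phi> \<longleftrightarrow> (\<exists>m x. m \<ge> 2 \<and> x \<ge> 1 \<and> (\<phi> ^^ m) x = x)"

text \<open>q_j, the j-th prime (q_1 = 2).\<close>
definition q :: "nat \<Rightarrow> nat" where
  "q j = enumerate {p. prime p} (j - 1)"

definition prime_pi :: "nat \<Rightarrow> nat" where
  "prime_pi x = card {p. prime p \<and> p \<le> x}"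

definition phi_primes :: "nat \<Rightarrow> nat" where
  "phi_primes x = (if prime x then q (Suc (THE j. j \<ge> 1 \<and> q j = x)) else 0)"

end

theory Submission
  imports Defs
begin

(*
  All matrices involved are 0/1 matrices of relations on {1..n}, for which sums, products
  and counts of nonzero entries become unions, compositions and cardinalities of relations.
  M_n(phi) is the matrix of the relation q_(j+1) <- q_j on the primes up to n, so its k-th
  power is the k-step shift of indices; this gives the formula for M_n(phi)^k, its Pi(n) - k
  nonzero entries and nilpotency of degree Pi(n). The strict order T = {(q_i, q_j). j < i}
  satisfies T = M + M T = M + T M, since a pair i > j is either adjacent or factors through
  q_(i-1), resp. q_(j+1); these two identities say exactly that I + T inverts I - M.
  Finally phi(0) = 0 and phi(x) is either 0 or larger than x, so no iterate of phi returns
  to a positive x: phi has neither fixed points nor cycles.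
*)

section \<open>Enumeration of the primes\<close>

lemma prime_q: "prime (q j)"
  unfolding q_def using enumerate_in_set[OF primes_infinite] by simp

lemma q_pos: "1 \<le> q j"
  using prime_q[of j] prime_gt_0_nat by (simp add: Suc_le_eq)

lemma q_less_iff: "1 \<le> i \<Longrightarrow> 1 \<le> j \<Longrightarrow> q i < q j \<longleftrightarrow> i < j"
  unfolding q_def using primes_infinite by auto

lemma q_le_iff: "1 \<le> i \<Longrightarrow> 1 \<le> j \<Longrightarrow> q i \<le> q j \<longleftrightarrow> i \<le> j"
  by (meson not_le q_less_iff)

lemma q_eq_iff: "1 \<le> i \<Longrightarrow> 1 \<le> j \<Longrightarrow> q i = q j \<longleftrightarrow> i = j"
  using q_less_iff[of i j] q_less_iff[of j i] by (auto simp: nat_neq_iff)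

lemma prime_qE:
  assumes "prime p"
  obtains j where "1 \<le> j" "q j = p"
proof -
  obtain k where "enumerate {p. prime p} k = p"
    using enumerate_Ex[OF primes_infinite] assms by blast
  then have "q (Suc k) = p" by (simp add: q_def)
  then show thesis using that[of "Suc k"] by simp
qed

lemma primes_le_q_eq_image:
  assumes "1 \<le> j"
  shows "{p. prime p \<and> p \<le> q j} = q ` {1..j}"
proof (intro equalityI subsetI)
  fix p assume "p \<in> {p. prime p \<and> p \<le> q j}"
  then have "prime p" "p \<le> q j" by auto
  moreover obtain i where "1 \<le> i" "q i = p" using prime_qE[OF \<open>prime p\<close>] .
  ultimately show "p \<in> q ` {1..j}" using assms q_le_iff by auto
next
  fix p assume "p \<in> q ` {1..j}"
  then show "p \<in> {p. prime p \<and> p \<le> q j}" using prime_q q_le_iff by auto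
qed

lemma prime_pi_q: "1 \<le> j \<Longrightarrow> prime_pi (q j) = j"
  unfolding prime_pi_def primes_le_q_eq_image
  by (subst card_image) (auto intro!: inj_onI simp: q_eq_iff)

lemma finite_primes_le: "finite {p::nat. prime p \<and> p \<le> n}"
  by (rule finite_subset[of _ "{..n}"]) auto

lemma q_le_iff_le_prime_pi:
  assumes "1 \<le> j"
  shows "q j \<le> n \<longleftrightarrow> j \<le> prime_pi n"
proof
  assume "q j \<le> n"
  then have "prime_pi (q j) \<le> prime_pi n"
    unfolding prime_pi_def by (intro card_mono[OF finite_primes_le]) auto
  then show "j \<le> prime_pi n" using prime_pi_q[OF assms] by simp
next
  assume j: "j \<le> prime_pi n"
  show "q j \<le> n"
  proof (rule ccontr)
    assume "\<not> q j \<le> n"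
    then have "{p. prime p \<and> p \<le> n} \<subset> {p. prime p \<and> p \<le> q j}"
      using prime_q[of j] by auto
    then have "prime_pi n < prime_pi (q j)"
      unfolding prime_pi_def by (rule psubset_card_mono[OF finite_primes_le])
    then show False using j prime_pi_q[OF assms] by simp
  qed
qed

lemma q_in_atLeastAtMost: "1 \<le> j \<Longrightarrow> j \<le> prime_pi n \<Longrightarrow> q j \<in> {1..n}"
  using q_pos q_le_iff_le_prime_pi by auto

lemma prime_pi_pos: "2 \<le> n \<Longrightarrow> 1 \<le> prime_pi n"
  using q_le_iff_le_prime_pi q_le_iff by (metis prime_qE two_is_prime_nat le_trans)

lemma phi_primes_q:
  assumes "1 \<le> j"
  shows "phi_primes (q j) = q (Suc j)"
proof -
  have "(THE i. 1 \<le> i \<and> q i = q j) = j"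
    using assms q_eq_iff by (intro the_equality) auto
  then show ?thesis unfolding phi_primes_def using prime_q by simp
qed

lemma phi_primes_not_prime: "\<not> prime x \<Longrightarrow> phi_primes x = 0"
  unfolding phi_primes_def by simp

lemma phi_primes_zero_or_greater: "phi_primes x = 0 \<or> x < phi_primes x"
proof (cases "prime x")
  case True
  then obtain j where "1 \<le> j" "q j = x" by (rule prime_qE)
  then show ?thesis using phi_primes_q q_less_iff[of j "Suc j"] by auto
qed (simp add: phi_primes_not_prime)

lemma funpow_Suc_zero_or_greater:
  fixes f :: "nat \<Rightarrow> nat"
  assumes "f 0 = 0" and "\<And>x. f x = 0 \<or> x < f x"
  shows "(f ^^ Suc m) x = 0 \<or> x < (f ^^ Suc m) x"
proof (induction m)
  case (Suc m)
  then show ?case using assms(2)[of "(f ^^ Suc m) x"] by (auto simp: assms(1))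
qed (use assms(2) in simp)

lemma not_has_cycle_if_zero_or_greater:
  fixes f :: "nat \<Rightarrow> nat"
  assumes "f 0 = 0" and "\<And>x. f x = 0 \<or> x < f x"
  shows "\<not> has_cycle f"
proof
  assume "has_cycle f"
  then obtain m x where "2 \<le> m" "1 \<le> x" "(f ^^ m) x = x"
    unfolding has_cycle_def by blast
  moreover obtain m' where "m = Suc m'" using \<open>2 \<le> m\<close> by (cases m) auto
  ultimately show False using funpow_Suc_zero_or_greater[OF assms, of m' x] by auto
qed

lemma finite_lower_pairs: "finite {(i, j). 1 \<le> j \<and> j < i \<and> i \<le> (m :: nat)}"
  by (rule finite_subset[of _ "{..m} \<times> {..m}"]) auto

lemma card_lower_pairs: "card {(i, j). 1 \<le> j \<and> j < i \<and> i \<le> m} = m choose 2"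
proof (induction m)
  case 0
  have "{(i, j). 1 \<le> j \<and> j < i \<and> i \<le> (0 :: nat)} = {}" by auto
  then show ?case by (simp only:) simp
next
  case (Suc m)
  have "{(i, j). 1 \<le> j \<and> j < i \<and> i \<le> Suc m}
      = {(i, j). 1 \<le> j \<and> j < i \<and> i \<le> m} \<union> Pair (Suc m) ` {1..m}"
    by auto
  also have "card \<dots> = card {(i, j). 1 \<le> j \<and> j < i \<and> i \<le> m} + card (Pair (Suc m) ` {1..m})"
    using finite_lower_pairs by (intro card_Un_disjoint) auto
  also have "card (Pair (Suc m) ` {1..m}) = m"
    by (simp add: card_image inj_on_def)
  finally show ?case using Suc.IH by (simp add: numeral_2_eq_2)
qed

lemma le_diff_iff_add_le: "1 \<le> j \<Longrightarrow> j \<le> m - k \<longleftrightarrow> j + k \<le> (m :: nat)"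
  by auto

section \<open>Matrices of relations\<close>

(* Entry (i, j) corresponds to the paper's entry (i + 1, j + 1). *)
definition rel_mat :: "nat \<Rightarrow> (nat \<Rightarrow> nat \<Rightarrow> bool) \<Rightarrow> 'a :: semiring_1 mat" where
  "rel_mat n r = mat n n (\<lambda>(i, j). of_bool (r (Suc i) (Suc j)))"

lemma rel_mat_carrier [simp]: "rel_mat n r \<in> carrier_mat n n"
  and dim_row_rel_mat [simp]: "dim_row (rel_mat n r) = n"
  and dim_col_rel_mat [simp]: "dim_col (rel_mat n r) = n"
  unfolding rel_mat_def by auto

lemma index_rel_mat [simp]:
  "i < n \<Longrightarrow> j < n \<Longrightarrow> rel_mat n r $$ (i, j) = of_bool (r (Suc i) (Suc j))"
  unfolding rel_mat_def by simp

lemma rel_mat_cong: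
  assumes "\<And>a b. a \<in> {1..n} \<Longrightarrow> b \<in> {1..n} \<Longrightarrow> r a b \<longleftrightarrow> s a b"
  shows "rel_mat n r = rel_mat n s"
  using assms by (intro eq_matI) (auto simp: Suc_le_eq)

lemma one_mat_eq_rel_mat: "1\<^sub>m n = rel_mat n (=)"
  by (intro eq_matI) auto

lemma zero_mat_eq_rel_mat: "0\<^sub>m n n = rel_mat n (\<lambda>_ _. False)"
  by (intro eq_matI) auto

lemma M_mat_eq_rel_mat: "M_mat n \<phi> = rel_mat n (\<lambda>a b. \<phi> b = a)"
  unfolding M_mat_def loc_fun_def by (intro eq_matI) auto

lemma dim_M_mat [simp]: "dim_row (M_mat n \<phi>) = n" "dim_col (M_mat n \<phi>) = n"
  unfolding M_mat_def by simp_all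

lemma E_mat_eq_rel_mat: "E_mat n i j = rel_mat n (\<lambda>a b. a = i \<and> b = j)"
  unfolding E_mat_def by (intro eq_matI) auto

lemma add_rel_mat:
  assumes "\<And>a b. \<not> (r a b \<and> s a b)"
  shows "rel_mat n r + rel_mat n s = (rel_mat n (\<lambda>a b. r a b \<or> s a b) :: 'a :: semiring_1 mat)"
  using assms by (intro eq_matI) auto

lemma sum_of_bool_unique:
  assumes "finite A" and "\<And>x y. x \<in> A \<Longrightarrow> y \<in> A \<Longrightarrow> P x \<Longrightarrow> P y \<Longrightarrow> x = y"
  shows "(\<Sum>x\<in>A. of_bool (P x) :: 'a :: semiring_1) = of_bool (\<exists>x\<in>A. P x)"
proof (cases "\<exists>x\<in>A. P x")
  case True
  then obtain x where "x \<in> A" "P x" by blast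
  then have "(\<Sum>y\<in>A. of_bool (P y) :: 'a) = (\<Sum>y\<in>A. if y = x then 1 else 0)"
    using assms(2) by (intro sum.cong) auto
  then show ?thesis using \<open>x \<in> A\<close> assms(1) True by simp
qed simp

lemma mult_rel_mat:
  assumes "\<And>a b c c'. r a c \<Longrightarrow> s c b \<Longrightarrow> r a c' \<Longrightarrow> s c' b \<Longrightarrow> c = c'"
  shows "rel_mat n r * rel_mat n s
    = (rel_mat n (\<lambda>a b. \<exists>c\<in>{1..n}. r a c \<and> s c b) :: 'a :: semiring_1 mat)"
proof (rule eq_matI)
  fix i j assume "i < dim_row (rel_mat n (\<lambda>a b. \<exists>c\<in>{1..n}. r a c \<and> s c b) :: 'a mat)"
    "j < dim_col (rel_mat n (\<lambda>a b. \<exists>c\<in>{1..n}. r a c \<and> s c b) :: 'a mat)"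
  then have ij: "i < n" "j < n" by simp_all
  have "(rel_mat n r * rel_mat n s :: 'a mat) $$ (i, j)
      = (\<Sum>k<n. of_bool (r (Suc i) (Suc k) \<and> s (Suc k) (Suc j)))"
    using ij by (simp add: scalar_prod_def lessThan_atLeast0 of_bool_conj)
  also have "\<dots> = of_bool (\<exists>k\<in>{..<n}. r (Suc i) (Suc k) \<and> s (Suc k) (Suc j))"
    by (rule sum_of_bool_unique) (auto dest: assms)
  also have "\<dots> = rel_mat n (\<lambda>a b. \<exists>c\<in>{1..n}. r a c \<and> s c b) $$ (i, j)"
    using ij unfolding image_Suc_lessThan[symmetric] by auto
  finally show "(rel_mat n r * rel_mat n s :: 'a mat) $$ (i, j)
      = rel_mat n (\<lambda>a b. \<exists>c\<in>{1..n}. r a c \<and> s c b) $$ (i, j)" .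
qed auto

lemma mat_sum_rel_mat:
  assumes "finite J" and "\<And>x y a b. x \<in> J \<Longrightarrow> y \<in> J \<Longrightarrow> r x a b \<Longrightarrow> r y a b \<Longrightarrow> x = y"
  shows "mat_sum n (\<lambda>x. rel_mat n (r x)) J = rel_mat n (\<lambda>a b. \<exists>x\<in>J. r x a b)"
  unfolding mat_sum_def using assms
  by (intro eq_matI) (simp_all add: sum_of_bool_unique del: sum_of_bool_eq)

lemma mat_sum_E_mat:
  assumes "finite J" and "inj_on (\<lambda>x. (f x, g x)) J"
  shows "mat_sum n (\<lambda>x. E_mat n (f x) (g x)) J = rel_mat n (\<lambda>a b. \<exists>x\<in>J. a = f x \<and> b = g x)"
  unfolding E_mat_eq_rel_mat
  by (rule mat_sum_rel_mat[OF assms(1)]) (use assms(2) in \<open>auto dest: inj_onD\<close>)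

lemma nnz_rel_mat:
  "nnz (rel_mat n r :: 'a :: semiring_1 mat) = card {(a, b). a \<in> {1..n} \<and> b \<in> {1..n} \<and> r a b}"
proof -
  have "{(i, j). i < dim_row (rel_mat n r :: 'a mat) \<and> j < dim_col (rel_mat n r :: 'a mat)
          \<and> (rel_mat n r :: 'a mat) $$ (i, j) \<noteq> 0}
      = {(i, j). i < n \<and> j < n \<and> r (Suc i) (Suc j)}"
    by auto
  moreover have "{(a, b). a \<in> {1..n} \<and> b \<in> {1..n} \<and> r a b}
      = map_prod Suc Suc ` {(i, j). i < n \<and> j < n \<and> r (Suc i) (Suc j)}"
    unfolding image_Suc_lessThan[symmetric] by force
  ultimately show ?thesis
    unfolding nnz_def by (simp add: card_image inj_on_def)
qed

lemma nnz_zero_mat: "nnz (0\<^sub>m n n :: 'a :: semiring_1 mat) = 0"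
  unfolding zero_mat_eq_rel_mat nnz_rel_mat by simp

lemma inverts_one_minus_mat:
  fixes M T :: "'a :: ring_1 mat"
  assumes M: "M \<in> carrier_mat n n" and T: "T \<in> carrier_mat n n" and "T = M + M * T"
  shows "inverts_mat (1\<^sub>m n - M) (1\<^sub>m n + T)"
proof -
  have "(1\<^sub>m n - M) * (1\<^sub>m n + T) = 1\<^sub>m n * (1\<^sub>m n + T) - M * (1\<^sub>m n + T)"
    using M T by (intro minus_mult_distrib_mat) auto
  also have "\<dots> = (1\<^sub>m n + T) - M * (1\<^sub>m n + T)"
    using T by simp
  also have "M * (1\<^sub>m n + T) = M + M * T"
    using M T by (simp add: mult_add_distrib_mat[OF M one_carrier_mat T])
  also have "(1\<^sub>m n + T) - (M + M * T) = 1\<^sub>m n"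
    using T assms(3)[symmetric] by (intro eq_matI) auto
  finally show ?thesis using M unfolding inverts_mat_def by simp
qed

lemma inverts_one_plus_mat:
  fixes M T :: "'a :: ring_1 mat"
  assumes M: "M \<in> carrier_mat n n" and T: "T \<in> carrier_mat n n" and "T = M + T * M"
  shows "inverts_mat (1\<^sub>m n + T) (1\<^sub>m n - M)"
proof -
  have "(1\<^sub>m n + T) * (1\<^sub>m n - M) = (1\<^sub>m n + T) * 1\<^sub>m n - (1\<^sub>m n + T) * M"
    using M T by (intro mult_minus_distrib_mat) auto
  also have "\<dots> = (1\<^sub>m n + T) - (1\<^sub>m n + T) * M"
    using T by simp
  also have "(1\<^sub>m n + T) * M = M + T * M"
    using M T by (simp add: add_mult_distrib_mat[OF one_carrier_mat T M])
  also have "(1\<^sub>m n + T) - (M + T * M) = 1\<^sub>m n"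
    using T assms(3)[symmetric] by (intro eq_matI) auto
  finally show ?thesis using T unfolding inverts_mat_def by simp
qed

section \<open>Powers of M_n(phi)\<close>

(* The support of M_n(phi)^k. *)
definition prime_shift :: "nat \<Rightarrow> nat \<Rightarrow> nat \<Rightarrow> nat \<Rightarrow> bool" where
  "prime_shift n k a b \<longleftrightarrow> (\<exists>j\<ge>1. j + k \<le> prime_pi n \<and> a = q (j + k) \<and> b = q j)"

lemma phi_primes_eq_iff_prime_shift:
  assumes "a \<in> {1..n}"
  shows "phi_primes b = a \<longleftrightarrow> prime_shift n 1 a b"
proof
  assume phi: "phi_primes b = a"
  then have "prime b" using assms phi_primes_not_prime by (cases "prime b") auto
  then obtain j where j: "1 \<le> j" "q j = b" using prime_qE by blast
  then have a: "a = q (Suc j)" using phi phi_primes_q by blast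
  then have "Suc j \<le> prime_pi n" using assms q_le_iff_le_prime_pi[of "Suc j" n] by simp
  then show "prime_shift n 1 a b" unfolding prime_shift_def using j a by auto
next
  assume "prime_shift n 1 a b"
  then obtain j where "1 \<le> j" "a = q (Suc j)" "b = q j"
    unfolding prime_shift_def by auto
  then show "phi_primes b = a" by (simp add: phi_primes_q)
qed

lemma M_mat_phi_primes: "M_mat n phi_primes = rel_mat n (prime_shift n 1)"
  unfolding M_mat_eq_rel_mat by (rule rel_mat_cong) (rule phi_primes_eq_iff_prime_shift)

lemma prime_shift_1_unique:
  "prime_shift n 1 a c \<Longrightarrow> prime_shift n 1 a c' \<Longrightarrow> c = c'"
  "prime_shift n 1 c b \<Longrightarrow> prime_shift n 1 c' b \<Longrightarrow> c = c'"
  unfolding prime_shift_def by (auto simp: q_eq_iff)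

lemma prime_shift_Suc:
  "(\<exists>c\<in>{1..n}. prime_shift n k a c \<and> prime_shift n 1 c b) \<longleftrightarrow> prime_shift n (Suc k) a b"
proof
  assume "\<exists>c\<in>{1..n}. prime_shift n k a c \<and> prime_shift n 1 c b"
  then obtain i j where ij: "1 \<le> i" "i + k \<le> prime_pi n" "a = q (i + k)"
    "1 \<le> j" "q i = q (Suc j)" "b = q j"
    unfolding prime_shift_def by auto
  then have "i = Suc j" using q_eq_iff by simp
  then show "prime_shift n (Suc k) a b"
    unfolding prime_shift_def using ij by (auto intro!: exI[of _ j])
next
  assume "prime_shift n (Suc k) a b"
  then obtain j where j: "1 \<le> j" "j + Suc k \<le> prime_pi n" "a = q (j + Suc k)" "b = q j"
    unfolding prime_shift_def by blast
  then have "prime_shift n k a (q (Suc j))"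
    unfolding prime_shift_def by (auto intro!: exI[of _ "Suc j"])
  moreover have "prime_shift n 1 (q (Suc j)) b"
    unfolding prime_shift_def using j by (auto intro!: exI[of _ j])
  moreover have "q (Suc j) \<in> {1..n}" using j q_in_atLeastAtMost[of "Suc j" n] by simp
  ultimately show "\<exists>c\<in>{1..n}. prime_shift n k a c \<and> prime_shift n 1 c b" by blast
qed

lemma M_mat_phi_primes_power:
  assumes "1 \<le> k"
  shows "M_mat n phi_primes ^\<^sub>m k = rel_mat n (prime_shift n k)"
  using assms
proof (induction k rule: dec_induct)
  case base
  show ?case using M_mat_phi_primes[of n] by (simp add: M_mat_def)
next
  case (step k)
  have "M_mat n phi_primes ^\<^sub>m Suc k = M_mat n phi_primes ^\<^sub>m k * M_mat n phi_primes"
    by (rule pow_mat.simps(2))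
  also have "\<dots> = rel_mat n (prime_shift n k) * rel_mat n (prime_shift n 1)"
    by (subst step.IH) (simp only: M_mat_phi_primes)
  also have "\<dots> = rel_mat n (\<lambda>a b. \<exists>c\<in>{1..n}. prime_shift n k a c \<and> prime_shift n 1 c b)"
    by (rule mult_rel_mat) (erule prime_shift_1_unique(2), assumption)
  also have "\<dots> = rel_mat n (prime_shift n (Suc k))"
    by (simp only: prime_shift_Suc)
  finally show ?case .
qed

lemma mat_sum_E_mat_prime_shift:
  "mat_sum n (\<lambda>j. E_mat n (q (j + k)) (q j)) {1..prime_pi n - k} = rel_mat n (prime_shift n k)"
  by (subst mat_sum_E_mat)
    (auto intro!: inj_onI rel_mat_cong simp: q_eq_iff prime_shift_def le_diff_iff_add_le, blast)

lemma card_prime_shift: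
  "card {(a, b). a \<in> {1..n} \<and> b \<in> {1..n} \<and> prime_shift n k a b} = prime_pi n - k"
proof -
  have "{(a, b). a \<in> {1..n} \<and> b \<in> {1..n} \<and> prime_shift n k a b}
      = (\<lambda>j. (q (j + k), q j)) ` {1..prime_pi n - k}"
    unfolding prime_shift_def image_def
    using q_in_atLeastAtMost[of _ n] by (auto simp: le_diff_iff_add_le, blast)
  moreover have "inj_on (\<lambda>j. (q (j + k), q j)) {1..prime_pi n - k}"
    by (auto intro!: inj_onI simp: q_eq_iff)
  ultimately show ?thesis by (simp add: card_image)
qed

lemma M_mat_phi_primes_power_eq_mat_sum:
  assumes "1 \<le> k"
  shows "M_mat n phi_primes ^\<^sub>m k = mat_sum n (\<lambda>j. E_mat n (q (j + k)) (q j)) {1..prime_pi n - k}"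
  unfolding M_mat_phi_primes_power[OF assms] mat_sum_E_mat_prime_shift ..

lemma nnz_M_mat_phi_primes_power:
  assumes "1 \<le> k"
  shows "nnz (M_mat n phi_primes ^\<^sub>m k) = prime_pi n - k"
  unfolding M_mat_phi_primes_power[OF assms] nnz_rel_mat card_prime_shift ..

lemma nilpotent_of_degree_M_mat_phi_primes:
  assumes "2 \<le> n"
  shows "nilpotent_of_degree (M_mat n phi_primes) (prime_pi n)"
proof -
  let ?M = "M_mat n phi_primes" and ?P = "prime_pi n"
  have P: "1 \<le> ?P" using prime_pi_pos[OF assms] .
  have "?M ^\<^sub>m ?P = 0\<^sub>m n n"
    unfolding M_mat_phi_primes_power[OF P] zero_mat_eq_rel_mat
    by (rule rel_mat_cong) (auto simp: prime_shift_def)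
  moreover have "?M ^\<^sub>m (?P - 1) \<noteq> 0\<^sub>m n n"
  proof (cases "?P = 1")
    case True
    have "(1\<^sub>m n :: int mat) $$ (0, 0) \<noteq> 0\<^sub>m n n $$ (0, 0)" using assms by simp
    then show ?thesis using True by auto
  next
    case False
    then have "nnz (?M ^\<^sub>m (?P - 1)) = 1"
      using P nnz_M_mat_phi_primes_power[of "?P - 1" n] by simp
    then show ?thesis by (auto simp: nnz_zero_mat)
  qed
  ultimately show ?thesis unfolding nilpotent_of_degree_def by simp
qed

section \<open>The inverse of I - M_n(phi)\<close>

(* The support of (I - M_n(phi))^-1 - I. *)
definition prime_below :: "nat \<Rightarrow> nat \<Rightarrow> nat \<Rightarrow> bool" where
  "prime_below n a b \<longleftrightarrow> (\<exists>i j. 1 \<le> j \<and> j < i \<and> i \<le> prime_pi n \<and> a = q i \<and> b = q j)"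

lemma prime_below_irrefl: "\<not> prime_below n a a"
  unfolding prime_below_def by (auto simp: q_eq_iff)

lemma prime_below_if_prime_shift_1: "prime_shift n 1 a b \<Longrightarrow> prime_below n a b"
  unfolding prime_shift_def prime_below_def by (metis add.commute le_add2 less_add_one)

lemma prime_below_step_left:
  assumes "prime_shift n 1 a c" and "prime_below n c b"
  shows "prime_below n a b"
proof -
  obtain j where j: "1 \<le> j" "Suc j \<le> prime_pi n" "a = q (Suc j)" "c = q j"
    using assms(1) unfolding prime_shift_def by auto
  obtain i k where ik: "1 \<le> k" "k < i" "c = q i" "b = q k"
    using assms(2) unfolding prime_below_def by blast
  have "i = j" using ik j q_eq_iff by (metis order.trans less_imp_le)
  then show ?thesis unfolding prime_below_def using j ik by (blast intro: less_SucI)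
qed

lemma prime_below_step_right:
  assumes "prime_below n a c" and "prime_shift n 1 c b"
  shows "prime_below n a b"
proof -
  obtain i k where ik: "1 \<le> k" "k < i" "i \<le> prime_pi n" "a = q i" "c = q k"
    using assms(1) unfolding prime_below_def by blast
  obtain j where j: "1 \<le> j" "c = q (Suc j)" "b = q j"
    using assms(2) unfolding prime_shift_def by auto
  have "k = Suc j" using ik j q_eq_iff by simp
  then show ?thesis unfolding prime_below_def using j ik by (blast intro: Suc_lessD)
qed

lemma prime_below_split_left:
  "prime_below n a b \<longleftrightarrow>
     prime_shift n 1 a b \<or> (\<exists>c\<in>{1..n}. prime_shift n 1 a c \<and> prime_below n c b)"
proof
  assume "prime_below n a b"
  then obtain i j where ij: "1 \<le> j" "j < i" "i \<le> prime_pi n" "a = q i" "b = q j"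
    unfolding prime_below_def by blast
  show "prime_shift n 1 a b \<or> (\<exists>c\<in>{1..n}. prime_shift n 1 a c \<and> prime_below n c b)"
  proof (cases "i = Suc j")
    case True
    have "prime_shift n 1 a b"
      unfolding prime_shift_def by (rule exI[of _ j]) (use ij True in auto)
    then show ?thesis by blast
  next
    case False
    then have "j < i - 1" "i - 1 \<le> prime_pi n" using ij by auto
    then have "prime_below n (q (i - 1)) b"
      unfolding prime_below_def using ij by blast
    moreover have "prime_shift n 1 a (q (i - 1))"
      unfolding prime_shift_def by (rule exI[of _ "i - 1"]) (use ij False in auto)
    moreover have "q (i - 1) \<in> {1..n}" using ij q_in_atLeastAtMost[of "i - 1" n] by simp
    ultimately show ?thesis by blast
  qed
next
  assume "prime_shift n 1 a b \<or> (\<exists>c\<in>{1..n}. prime_shift n 1 a c \<and> prime_below n c b)"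
  then show "prime_below n a b"
    by (elim disjE bexE conjE) (fact prime_below_if_prime_shift_1, rule prime_below_step_left)
qed

lemma prime_below_split_right:
  "prime_below n a b \<longleftrightarrow>
     prime_shift n 1 a b \<or> (\<exists>c\<in>{1..n}. prime_below n a c \<and> prime_shift n 1 c b)"
proof
  assume "prime_below n a b"
  then obtain i j where ij: "1 \<le> j" "j < i" "i \<le> prime_pi n" "a = q i" "b = q j"
    unfolding prime_below_def by blast
  show "prime_shift n 1 a b \<or> (\<exists>c\<in>{1..n}. prime_below n a c \<and> prime_shift n 1 c b)"
  proof (cases "i = Suc j")
    case True
    have "prime_shift n 1 a b"
      unfolding prime_shift_def by (rule exI[of _ j]) (use ij True in auto)
    then show ?thesis by blast
  next
    case False
    then have "1 \<le> Suc j" "Suc j < i" using ij by auto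
    then have "prime_below n a (q (Suc j))"
      unfolding prime_below_def using ij by blast
    moreover have "prime_shift n 1 (q (Suc j)) b"
      unfolding prime_shift_def by (rule exI[of _ j]) (use ij in auto)
    moreover have "q (Suc j) \<in> {1..n}" using ij q_in_atLeastAtMost[of "Suc j" n] by simp
    ultimately show ?thesis by blast
  qed
next
  assume "prime_shift n 1 a b \<or> (\<exists>c\<in>{1..n}. prime_below n a c \<and> prime_shift n 1 c b)"
  then show "prime_below n a b"
    by (elim disjE bexE conjE) (fact prime_below_if_prime_shift_1, rule prime_below_step_right)
qed

lemma mat_sum_E_mat_prime_below:
  "mat_sum n (\<lambda>(i, j). E_mat n (q i) (q j)) {(i, j). 1 \<le> j \<and> j < i \<and> i \<le> prime_pi n}
     = rel_mat n (prime_below n)"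
proof -
  have "(\<lambda>(i, j). E_mat n (q i) (q j)) = (\<lambda>x. E_mat n (q (fst x)) (q (snd x)))"
    by (simp add: split_def)
  then show ?thesis
    by (simp only:, subst mat_sum_E_mat[OF finite_lower_pairs])
      (auto intro!: inj_onI rel_mat_cong simp: q_eq_iff prod_eq_iff prime_below_def, blast)
qed

lemma prime_below_eq_image:
  "{(a, b). prime_below n a b} = (\<lambda>(i, j). (q i, q j)) ` {(i, j). 1 \<le> j \<and> j < i \<and> i \<le> prime_pi n}"
  unfolding prime_below_def by auto

lemma prime_below_in_range:
  assumes "prime_below n a b"
  shows "a \<in> {1..n}" and "b \<in> {1..n}"
proof -
  obtain i j where "1 \<le> j" "j < i" "i \<le> prime_pi n" "a = q i" "b = q j"
    using assms unfolding prime_below_def by blast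
  then show "a \<in> {1..n}" and "b \<in> {1..n}"
    using q_in_atLeastAtMost[of i n] q_in_atLeastAtMost[of j n] by auto
qed

lemma card_prime_below: "card {(a, b). prime_below n a b} = prime_pi n choose 2"
proof -
  have inj: "inj_on (\<lambda>(i, j). (q i, q j)) {(i, j). 1 \<le> j \<and> j < i \<and> i \<le> prime_pi n}"
    by (rule inj_onI) (clarsimp simp: q_eq_iff)
  show ?thesis
    unfolding prime_below_eq_image card_image[OF inj] by (rule card_lower_pairs)
qed

lemma card_prime_below_refl:
  "card {(a, b). a \<in> {1..n} \<and> b \<in> {1..n} \<and> (a = b \<or> prime_below n a b)}
     = n + (prime_pi n choose 2)"
proof -
  have "{(a, b). a \<in> {1..n} \<and> b \<in> {1..n} \<and> (a = b \<or> prime_below n a b)}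
      = (\<lambda>a. (a, a)) ` {1..n} \<union> {(a, b). prime_below n a b}"
    using prime_below_in_range[of n] by auto
  also have "card \<dots> = card ((\<lambda>a. (a, a)) ` {1..n}) + card {(a, b). prime_below n a b}"
  proof (rule card_Un_disjoint)
    show "finite {(a, b). prime_below n a b}"
      unfolding prime_below_eq_image by (rule finite_imageI[OF finite_lower_pairs])
  qed (use prime_below_irrefl in auto)
  also have "card ((\<lambda>a. (a, a)) ` {1..n}) = n"
    by (simp add: card_image inj_on_def)
  finally show ?thesis by (simp add: card_prime_below)
qed

lemma rel_mat_prime_below_left:
  "(rel_mat n (prime_below n) :: 'a :: semiring_1 mat)
     = rel_mat n (prime_shift n 1) + rel_mat n (prime_shift n 1) * rel_mat n (prime_below n)"
proof -
  have "(rel_mat n (prime_below n) :: 'a mat)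
      = rel_mat n (\<lambda>a b. prime_shift n 1 a b
          \<or> (\<exists>c\<in>{1..n}. prime_shift n 1 a c \<and> prime_below n c b))"
    by (rule rel_mat_cong) (rule prime_below_split_left)
  also have "\<dots> = rel_mat n (prime_shift n 1)
      + rel_mat n (\<lambda>a b. \<exists>c\<in>{1..n}. prime_shift n 1 a c \<and> prime_below n c b)"
    by (rule add_rel_mat[symmetric]) (metis prime_below_irrefl prime_shift_1_unique(1))
  also have "rel_mat n (\<lambda>a b. \<exists>c\<in>{1..n}. prime_shift n 1 a c \<and> prime_below n c b)
      = (rel_mat n (prime_shift n 1) * rel_mat n (prime_below n) :: 'a mat)"
    by (rule mult_rel_mat[symmetric]) (erule prime_shift_1_unique(1), assumption)
  finally show ?thesis .
qed

lemma rel_mat_prime_below_right: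
  "(rel_mat n (prime_below n) :: 'a :: semiring_1 mat)
     = rel_mat n (prime_shift n 1) + rel_mat n (prime_below n) * rel_mat n (prime_shift n 1)"
proof -
  have "(rel_mat n (prime_below n) :: 'a mat)
      = rel_mat n (\<lambda>a b. prime_shift n 1 a b
          \<or> (\<exists>c\<in>{1..n}. prime_below n a c \<and> prime_shift n 1 c b))"
    by (rule rel_mat_cong) (rule prime_below_split_right)
  also have "\<dots> = rel_mat n (prime_shift n 1)
      + rel_mat n (\<lambda>a b. \<exists>c\<in>{1..n}. prime_below n a c \<and> prime_shift n 1 c b)"
    by (rule add_rel_mat[symmetric]) (metis prime_below_irrefl prime_shift_1_unique(2))
  also have "rel_mat n (\<lambda>a b. \<exists>c\<in>{1..n}. prime_below n a c \<and> prime_shift n 1 c b)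
      = (rel_mat n (prime_below n) * rel_mat n (prime_shift n 1) :: 'a mat)"
    by (rule mult_rel_mat[symmetric]) (erule prime_shift_1_unique(2), assumption)
  finally show ?thesis .
qed

lemma M_hat_phi_primes: "M_hat n phi_primes = 1\<^sub>m n - rel_mat n (prime_shift n 1)"
  unfolding M_hat_def M_mat_phi_primes ..

lemma inverts_M_hat_phi_primes:
  shows "inverts_mat (M_hat n phi_primes) (1\<^sub>m n + rel_mat n (prime_below n))"
    and "inverts_mat (1\<^sub>m n + rel_mat n (prime_below n)) (M_hat n phi_primes)"
  unfolding M_hat_phi_primes
  by (rule inverts_one_minus_mat[OF rel_mat_carrier rel_mat_carrier rel_mat_prime_below_left],
      rule inverts_one_plus_mat[OF rel_mat_carrier rel_mat_carrier rel_mat_prime_below_right])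

lemma nnz_one_plus_prime_below:
  "nnz (1\<^sub>m n + rel_mat n (prime_below n) :: int mat) = n + (prime_pi n choose 2)"
proof -
  have "(1\<^sub>m n + rel_mat n (prime_below n) :: int mat)
      = rel_mat n (\<lambda>a b. a = b \<or> prime_below n a b)"
    unfolding one_mat_eq_rel_mat by (rule add_rel_mat) (use prime_below_irrefl in blast)
  then show ?thesis
    by (simp only: nnz_rel_mat card_prime_below_refl)
qed

theorem proposition5p3:
  shows "(\<forall>x::nat. x \<ge> 1 \<longrightarrow> phi_primes x \<noteq> x)
    \<and> \<not> has_cycle phi_primes
    \<and> (\<forall>n::nat. n \<ge> 2 \<longrightarrow>
         nilpotent_of_degree (M_mat n phi_primes) (prime_pi n)
       \<and> (\<forall>k. 1 \<le> k \<and> k \<le> prime_pi n \<longrightarrow>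
             M_mat n phi_primes ^\<^sub>m k
               = mat_sum n (\<lambda>j. E_mat n (q (j + k)) (q j)) {1..prime_pi n - k}
           \<and> nnz (M_mat n phi_primes ^\<^sub>m k) = prime_pi n - k)
       \<and> (let B = 1\<^sub>m n + mat_sum n (\<lambda>(i, j). E_mat n (q i) (q j))
                     {(i, j). 1 \<le> j \<and> j < i \<and> i \<le> prime_pi n}
          in inverts_mat (M_hat n phi_primes) B \<and> inverts_mat B (M_hat n phi_primes)
             \<and> nnz B = n + (prime_pi n choose 2)))"
proof (intro conjI allI impI)
  show "phi_primes x \<noteq> x" if "x \<ge> 1" for x
    using that phi_primes_zero_or_greater[of x] by auto
  show "\<not> has_cycle phi_primes"
    by (rule not_has_cycle_if_zero_or_greater)
      (simp_all add: phi_primes_not_prime phi_primes_zero_or_greater)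
  fix n :: nat assume "2 \<le> n"
  then show "nilpotent_of_degree (M_mat n phi_primes) (prime_pi n)"
    by (rule nilpotent_of_degree_M_mat_phi_primes)
  show "M_mat n phi_primes ^\<^sub>m k = mat_sum n (\<lambda>j. E_mat n (q (j + k)) (q j)) {1..prime_pi n - k}"
    and "nnz (M_mat n phi_primes ^\<^sub>m k) = prime_pi n - k"
    if "1 \<le> k \<and> k \<le> prime_pi n" for k
    using that M_mat_phi_primes_power_eq_mat_sum nnz_M_mat_phi_primes_power by auto
  show "let B = 1\<^sub>m n + mat_sum n (\<lambda>(i, j). E_mat n (q i) (q j))
                     {(i, j). 1 \<le> j \<and> j < i \<and> i \<le> prime_pi n}
          in inverts_mat (M_hat n phi_primes) B \<and> inverts_mat B (M_hat n phi_primes)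
             \<and> nnz B = n + (prime_pi n choose 2)"
    unfolding Let_def mat_sum_E_mat_prime_below
    using inverts_M_hat_phi_primes nnz_one_plus_prime_below by blast
qed

end
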